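(* Let $d=d(n)$ be a positive integer depending on the positive integer $n$; asymptotic statements refer to $n\to\infty$. (a) If $d>n^3/2$, then $$1\leq \frac{p_d(n)}{\binom{d+n-2}{d-1}}<\frac{1}{1-\frac{n^3}{2d}}.$$ (b) If $d n^{-2}\to\infty$ as $n\to\infty$, then $\log p_d(n)=(n-1)(\log d-\log n+1)+o(n)$. (c) If $cn^2\leq d\leq Cn^2$ for some positive constants $c$ and $C$, then $\log p_d(n)=n\log n+O(n)$. (d) If $d n^{-2}\to 0$ and $\log d\geq \log n+o(\log n)$ as $n\to\infty$, then $\log p_d(n)=n\log n+o(n\log n)$.
   Context: Let $\mathbb{Z}_+=\{0,1,2,\dots\}$. A set $S\subset\mathbb{Z}_+^d$ is a lower set if whenever $\mathbf{x}\in S$ and $\mathbf{x}'\in\mathbb{Z}_+^d$ satisfies $x'_i\leq x_i$ for all $i$, then $\mathbf{x}'\in S$. For positive integers $d,n$, $p_d(n)$ denotes the number of lower sets in $\mathbb{Z}_+^d$ with exactly $n$ points. $\log$ is the natural logarithm. *)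

theory Defs
  imports Complex_Main "HOL-Library.Landau_Symbols"
begin

text \<open>Points of \<open>Z_+^d\<close> are encoded as functions \<open>nat \<Rightarrow> nat\<close> vanishing at all
  coordinates \<open>i \<ge> d\<close> (coordinates are indexed by \<open>0..<d\<close>).\<close>

definition zplus :: "nat \<Rightarrow> (nat \<Rightarrow> nat) set" where
  "zplus d = {x. \<forall>i\<ge>d. x i = 0}"

definition lower_set :: "nat \<Rightarrow> (nat \<Rightarrow> nat) set \<Rightarrow> bool" where
  "lower_set d S \<longleftrightarrow> S \<subseteq> zplus d \<and>
     (\<forall>x\<in>S. \<forall>x'\<in>zplus d. (\<forall>i<d. x' i \<le> x i) \<longrightarrow> x' \<in> S)"

definition p :: "nat \<Rightarrow> nat \<Rightarrow> nat" where
  "p d n = card {S. lower_set d S \<and> finite S \<and> card S = n}"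

end

(*
  A lower set all of whose points lie on the coordinate axes is determined by the
  lengths of its d arms, so there are exactly C(n+d-2, n-1) of them with n points. When d is small
  compared to n^2, more lower sets are obtained from the origin, K unit vectors and any n-1-K of the
  C(K,2) sums of two of them, i.e. from graphs on K vertices.

  A lower set S is determined by its axial part A (the points with at most one nonzero
  coordinate, m+1 of them) together with its levels, the sets of points with exactly s nonzero
  coordinates. Every point of level 2 is the join of two nonzero points of A, and every point of
  level s+1 is the join of a point of level s and a nonzero point of A. Counting such towers of
  levels, k = n-1-m non-axial points can be placed in at most 2^(k-1) C(C(m,2) + m k, k) ways, which
  gives p_d(n) <= C(n+d-2, n-1) * sum_k (n^3/(2d))^k and p_d(n) <= C(n+D-2, n-1) * exp(n^3/D) for
  d <= D. Elementary bounds on ln k! turn these estimates into the asymptotic statements.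
*)
theory Submission
  imports Defs "HOL-Library.Indicator_Function" "HOL-Real_Asymp.Real_Asymp"
begin

section \<open>Counting towers\<close>

fun is_tower :: "('a set \<Rightarrow> 'a set) \<Rightarrow> 'a set \<Rightarrow> 'a set list \<Rightarrow> bool" where
  "is_tower W V [] = True"
| "is_tower W V (Y # Ys) \<longleftrightarrow> Y \<subseteq> V \<and> is_tower W (W Y) Ys"

definition towers :: "('a set \<Rightarrow> 'a set) \<Rightarrow> 'a set \<Rightarrow> nat \<Rightarrow> nat \<Rightarrow> 'a set list set" where
  "towers W V L r =
     {Ys. length Ys = L \<and> is_tower W V Ys \<and> (\<forall>Y\<in>set Ys. finite Y) \<and> sum_list (map card Ys) = r}"

definition tower_bound :: "nat \<Rightarrow> nat \<Rightarrow> nat \<Rightarrow> nat" where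
  "tower_bound c N r = (if r = 0 then 1 else if N = 0 then 0 else 2 ^ (r - 1) * ((N + c * r) choose r))"

lemma tower_bound_mono: "N \<le> N' \<Longrightarrow> tower_bound c N r \<le> tower_bound c N' r"
  unfolding tower_bound_def by (auto intro: binomial_right_mono)

lemma towers_0: "towers W V 0 r = (if r = 0 then {[]} else {})"
  unfolding towers_def by auto

lemma towers_Suc:
  "towers W V (Suc L) r =
     (\<Union>Y\<in>{Y. Y \<subseteq> V \<and> finite Y \<and> card Y \<le> r}. (#) Y ` towers W (W Y) L (r - card Y))"
proof (rule set_eqI)
  fix Ys :: "'a set list"
  show "Ys \<in> towers W V (Suc L) r \<longleftrightarrow>
        Ys \<in> (\<Union>Y\<in>{Y. Y \<subseteq> V \<and> finite Y \<and> card Y \<le> r}. (#) Y ` towers W (W Y) L (r - card Y))"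
    by (cases Ys) (auto simp: towers_def)
qed

lemma sum_one_and_pow2_pred: "r \<ge> 1 \<Longrightarrow> (\<Sum>j<r. if j = 0 then 1 else 2 ^ (j - 1)) = (2::nat) ^ (r - 1)"
proof (induction r rule: dec_induct)
  case (step r)
  then show ?case by (cases r) simp_all
qed simp

lemma tower_bound_recursion: "(\<Sum>k\<le>r. (N choose k) * tower_bound c (c * k) (r - k)) \<le> tower_bound c N r"
proof (cases "r = 0 \<or> N = 0")
  case True
  then show ?thesis by (auto simp: tower_bound_def)
next
  case False
  then have r: "r \<ge> 1" and N: "N \<noteq> 0" by auto
  define B where "B = (N + c * r) choose r"
  define w :: "nat \<Rightarrow> nat" where "w j = (if j = 0 then 1 else 2 ^ (j - 1))" for j
  have term_le: "(N choose k) * tower_bound c (c * k) (r - k) \<le> w (r - k) * B" if "1 \<le> k" "k \<le> r" for k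
  proof (cases "k = r")
    case True
    then show ?thesis by (simp add: tower_bound_def w_def B_def binomial_right_mono)
  next
    case False
    have "(N choose k) * ((c * r) choose (r - k)) \<le> B"
      unfolding B_def vandermonde[symmetric] using that by (intro member_le_sum) auto
    moreover have "c * k + c * (r - k) = c * r"
      using that by (simp add: add_mult_distrib2[symmetric])
    ultimately show ?thesis
      using that False by (simp add: tower_bound_def w_def)
  qed
  have "(\<Sum>k\<le>r. (N choose k) * tower_bound c (c * k) (r - k))
        = (\<Sum>k=1..r. (N choose k) * tower_bound c (c * k) (r - k))"
    using r by (intro sum.mono_neutral_right) (auto simp: tower_bound_def)
  also have "\<dots> \<le> (\<Sum>k=1..r. w (r - k) * B)"
    using term_le by (intro sum_mono) auto
  also have "(\<Sum>k=1..r. w (r - k)) = (\<Sum>j<r. w j)"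
    by (rule sum.reindex_bij_witness[of _ "\<lambda>j. r - j" "\<lambda>k. r - k"]) auto
  then have "(\<Sum>k=1..r. w (r - k) * B) = 2 ^ (r - 1) * B"
    using sum_one_and_pow2_pred[OF r] by (simp add: w_def sum_distrib_right[symmetric])
  finally show ?thesis
    using r N by (simp add: tower_bound_def B_def)
qed

lemma sum_subsets_by_card:
  assumes "finite V"
  shows "(\<Sum>Y\<in>{Y. Y \<subseteq> V \<and> finite Y \<and> card Y \<le> r}. g (card Y)) = (\<Sum>k\<le>r. (card V choose k) * g k)"
proof -
  let ?I = "{Y. Y \<subseteq> V \<and> finite Y \<and> card Y \<le> r}"
  have "finite ?I"
    by (rule finite_subset[of _ "Pow V"]) (use assms in auto)
  then have "(\<Sum>Y\<in>?I. g (card Y)) = (\<Sum>k\<le>r. \<Sum>Y\<in>{Y \<in> ?I. card Y = k}. g (card Y))"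
    by (intro sum.group[symmetric]) auto
  also have "\<dots> = (\<Sum>k\<le>r. \<Sum>Y\<in>{Y. Y \<subseteq> V \<and> card Y = k}. g k)"
  proof (rule sum.cong[OF refl])
    fix k assume "k \<in> {..r}"
    then have "{Y \<in> ?I. card Y = k} = {Y. Y \<subseteq> V \<and> card Y = k}"
      using finite_subset[OF _ assms] by blast
    then show "(\<Sum>Y\<in>{Y \<in> ?I. card Y = k}. g (card Y)) = (\<Sum>Y\<in>{Y. Y \<subseteq> V \<and> card Y = k}. g k)"
      by (auto intro: sum.cong)
  qed
  also have "\<dots> = (\<Sum>k\<le>r. (card V choose k) * g k)"
    using n_subsets[OF assms] by simp
  finally show ?thesis .
qed

lemma card_towers_le:
  assumes "finite V" and W: "\<And>Y. finite Y \<Longrightarrow> finite (W Y) \<and> card (W Y) \<le> c * card Y"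
  shows "finite (towers W V L r) \<and> card (towers W V L r) \<le> tower_bound c (card V) r"
  using assms(1)
proof (induction L arbitrary: V r)
  case 0
  then show ?case by (auto simp: towers_0 tower_bound_def)
next
  case (Suc L)
  let ?I = "{Y. Y \<subseteq> V \<and> finite Y \<and> card Y \<le> r}"
  have fin_I: "finite ?I"
    by (rule finite_subset[of _ "Pow V"]) (use Suc.prems in auto)
  have IH: "finite (towers W (W Y) L (r - card Y)) \<and>
            card (towers W (W Y) L (r - card Y)) \<le> tower_bound c (c * card Y) (r - card Y)"
    if "Y \<in> ?I" for Y
  proof -
    have "finite (W Y)" and "card (W Y) \<le> c * card Y"
      using that W by auto
    with Suc.IH[of "W Y" "r - card Y"] show ?thesis
      using tower_bound_mono[of "card (W Y)" "c * card Y" c "r - card Y"] by linarith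
  qed
  have "card (towers W V (Suc L) r) \<le> (\<Sum>Y\<in>?I. card ((#) Y ` towers W (W Y) L (r - card Y)))"
    unfolding towers_Suc by (rule card_UN_le[OF fin_I])
  also have "\<dots> \<le> (\<Sum>Y\<in>?I. tower_bound c (c * card Y) (r - card Y))"
  proof (rule sum_mono)
    fix Y assume "Y \<in> ?I"
    then show "card ((#) Y ` towers W (W Y) L (r - card Y)) \<le> tower_bound c (c * card Y) (r - card Y)"
      using IH card_image_le[of "towers W (W Y) L (r - card Y)" "(#) Y"] le_trans by blast
  qed
  also have "\<dots> = (\<Sum>k\<le>r. (card V choose k) * tower_bound c (c * k) (r - k))"
    by (rule sum_subsets_by_card[OF Suc.prems])
  also have "\<dots> \<le> tower_bound c (card V) r"
    by (rule tower_bound_recursion)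
  finally show ?case
    unfolding towers_Suc using fin_I IH by auto
qed


section \<open>Axial lower sets\<close>

definition lower_sets :: "nat \<Rightarrow> nat \<Rightarrow> (nat \<Rightarrow> nat) set set" where
  "lower_sets d n = {S. lower_set d S \<and> finite S \<and> card S = n}"

definition supp :: "(nat \<Rightarrow> nat) \<Rightarrow> nat set" where
  "supp x = {i. x i \<noteq> 0}"

definition origin :: "nat \<Rightarrow> nat" where
  "origin = (\<lambda>_. 0)"

definition axis_point :: "nat \<Rightarrow> nat \<Rightarrow> nat \<Rightarrow> nat" where
  "axis_point i c = (\<lambda>t. if t = i then c else 0)"

definition axial_lower_sets :: "nat \<Rightarrow> nat \<Rightarrow> (nat \<Rightarrow> nat) set set" where
  "axial_lower_sets d n = {A \<in> lower_sets d n. \<forall>x\<in>A. card (supp x) \<le> 1}"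

definition axis_profiles :: "nat \<Rightarrow> nat \<Rightarrow> (nat \<Rightarrow> nat) set" where
  "axis_profiles d m = {L. (\<forall>i\<ge>d. L i = 0) \<and> sum L {..<d} = m}"

definition multichoose :: "nat \<Rightarrow> nat \<Rightarrow> nat" where
  "multichoose d m = (m + d - 1) choose m"

definition axial_set :: "nat \<Rightarrow> (nat \<Rightarrow> nat) \<Rightarrow> (nat \<Rightarrow> nat) set" where
  "axial_set d L = insert origin (\<Union>i<d. axis_point i ` {1..L i})"

lemma p_eq_card_lower_sets: "p d n = card (lower_sets d n)"
  by (simp add: p_def lower_sets_def)

lemma axis_point_eq_iff: "c \<noteq> 0 \<Longrightarrow> c' \<noteq> 0 \<Longrightarrow> axis_point i c = axis_point j c' \<longleftrightarrow> i = j \<and> c = c'"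
  unfolding axis_point_def by metis

lemma axis_point_eq_origin_iff: "axis_point i c = origin \<longleftrightarrow> c = 0"
  unfolding axis_point_def origin_def by (metis (full_types))

lemma origin_eq_axis_point_iff: "origin = axis_point i c \<longleftrightarrow> c = 0"
  using axis_point_eq_origin_iff by metis

lemma supp_origin [simp]: "supp origin = {}"
  by (simp add: supp_def origin_def)

lemma supp_axis_point: "c \<noteq> 0 \<Longrightarrow> supp (axis_point i c) = {i}"
  by (auto simp: supp_def axis_point_def)

lemma zplus_eq_0: "x \<in> zplus d \<Longrightarrow> i \<ge> d \<Longrightarrow> x i = 0"
  by (simp add: zplus_def)

lemma supp_subset_zplus:
  assumes "x \<in> zplus d"
  shows "supp x \<subseteq> {..<d}"
proof
  fix i assume "i \<in> supp x"
  then show "i \<in> {..<d}"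
    using zplus_eq_0[OF assms, of i] by (cases "i < d") (auto simp: supp_def)
qed

lemma finite_supp: "x \<in> zplus d \<Longrightarrow> finite (supp x)"
  using supp_subset_zplus finite_subset by blast

lemma card_supp_le: "x \<in> zplus d \<Longrightarrow> card (supp x) \<le> d"
  using card_mono[OF finite_lessThan supp_subset_zplus] by fastforce

lemma card_supp_le_1_cases:
  assumes "finite (supp x)" "card (supp x) \<le> 1"
  obtains "x = origin" | i where "x i \<noteq> 0" "x = axis_point i (x i)"
proof (cases "supp x = {}")
  case True
  then have "x = origin"
    unfolding supp_def origin_def by auto
  then show ?thesis ..
next
  case False
  then obtain i where i: "i \<in> supp x"
    by blast
  with assms have "supp x = {i}"
    using card_le_Suc0_iff_eq[OF assms(1)] by auto
  then have "x t = 0" if "t \<noteq> i" for t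
    using that unfolding supp_def by blast
  then have "x = axis_point i (x i)"
    by (auto simp: axis_point_def fun_eq_iff)
  moreover from i have "x i \<noteq> 0"
    by (simp add: supp_def)
  ultimately show ?thesis
    using that(2) by blast
qed

lemma lower_setD: "lower_set d S \<Longrightarrow> x \<in> S \<Longrightarrow> x' \<in> zplus d \<Longrightarrow> (\<forall>i<d. x' i \<le> x i) \<Longrightarrow> x' \<in> S"
  unfolding lower_set_def by blast

lemma lower_set_subset_zplus: "lower_set d S \<Longrightarrow> S \<subseteq> zplus d"
  unfolding lower_set_def by blast

lemma origin_in_lower_set:
  assumes "lower_set d S" "S \<noteq> {}"
  shows "origin \<in> S"
proof -
  obtain x where "x \<in> S"
    using assms(2) by blast
  then show ?thesis
    by (rule lower_setD[OF assms(1)]) (auto simp: origin_def zplus_def)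
qed

lemma axis_point_in_lower_set:
  assumes S: "lower_set d S" and x: "x \<in> S" and c: "c \<le> x i"
  shows "axis_point i c \<in> S"
proof (rule lower_setD[OF S x])
  have "x \<in> zplus d"
    using lower_set_subset_zplus[OF S] x by blast
  then show "axis_point i c \<in> zplus d"
    using c by (auto simp: axis_point_def zplus_def)
qed (use c in \<open>auto simp: axis_point_def\<close>)

lemma finite_axial_set: "finite (axial_set d L)"
  by (simp add: axial_set_def)

lemma card_axial_set: "card (axial_set d L) = 1 + sum L {..<d}"
proof -
  have inj: "inj_on (axis_point i) {1..L i}" for i
    by (rule inj_onI) (simp add: axis_point_eq_iff)
  have "axis_point i c \<noteq> axis_point j c'" if "i \<noteq> j" "c \<noteq> 0" for i j c c'
    using that by (simp add: axis_point_def fun_eq_iff) metis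
  then have "card (\<Union>i<d. axis_point i ` {1..L i}) = (\<Sum>i<d. card (axis_point i ` {1..L i}))"
    by (intro card_UN_disjoint) auto
  also have "\<dots> = sum L {..<d}"
    using inj by (simp add: card_image)
  moreover have "origin \<notin> (\<Union>i<d. axis_point i ` {1..L i})"
    by (auto simp: origin_eq_axis_point_iff)
  ultimately show ?thesis
    by (simp add: axial_set_def)
qed

lemma axis_point_in_axial_set_iff:
  assumes "c \<noteq> 0" "i < d"
  shows "axis_point i c \<in> axial_set d L \<longleftrightarrow> c \<le> L i"
proof -
  have "axis_point i c \<in> axis_point j ` {1..L j} \<longleftrightarrow> j = i \<and> c \<le> L i" for j
  proof
    assume "axis_point i c \<in> axis_point j ` {1..L j}"
    then obtain c' where "c' \<in> {1..L j}" "axis_point i c = axis_point j c'"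
      by blast
    then show "j = i \<and> c \<le> L i"
      using assms(1) axis_point_eq_iff[of c c' i j] by simp
  qed (use assms(1) in auto)
  then show ?thesis
    using assms by (simp add: axial_set_def axis_point_eq_origin_iff)
qed

lemma lower_set_axial_set:
  assumes "\<forall>i\<ge>d. L i = 0"
  shows "lower_set d (axial_set d L)"
  unfolding lower_set_def
proof (intro conjI ballI impI)
  show "axial_set d L \<subseteq> zplus d"
    by (auto simp: axial_set_def zplus_def axis_point_def origin_def)
next
  fix x x' assume x: "x \<in> axial_set d L" and x': "x' \<in> zplus d" and le: "\<forall>i<d. x' i \<le> x i"
  have le': "x' t \<le> x t" for t
    using le zplus_eq_0[OF x'] by (cases "t < d") auto
  show "x' \<in> axial_set d L"
  proof (cases "x = origin")
    case True
    then have "x' = origin"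
      using le' by (auto simp: origin_def fun_eq_iff)
    then show ?thesis by (simp add: axial_set_def)
  next
    case False
    then obtain i c where i: "i < d" "c \<le> L i" and x_eq: "x = axis_point i c"
      using x by (auto simp: axial_set_def)
    have "x' t = 0" if "t \<noteq> i" for t
      using le'[of t] that x_eq by (simp add: axis_point_def)
    then have "x' = axis_point i (x' i)"
      by (auto simp: axis_point_def)
    moreover have "x' i \<le> c"
      using le'[of i] x_eq by (simp add: axis_point_def)
    ultimately show ?thesis
      using i axis_point_in_axial_set_iff[of "x' i" i d L]
      by (cases "x' i = 0") (auto simp: axial_set_def axis_point_eq_origin_iff)
  qed
qed

lemma axial_set_in_axial_lower_sets:
  assumes "L \<in> axis_profiles d m"
  shows "axial_set d L \<in> axial_lower_sets d (Suc m)"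
proof -
  have "card (supp x) \<le> 1" if "x \<in> axial_set d L" for x
    using that unfolding axial_set_def by (auto simp: supp_axis_point)
  then show ?thesis
    using assms lower_set_axial_set[of d L] finite_axial_set[of d L] card_axial_set[of d L]
    by (auto simp: axial_lower_sets_def lower_sets_def axis_profiles_def)
qed

lemma inj_on_axial_set: "inj_on (axial_set d) (axis_profiles d m)"
proof (rule inj_onI)
  fix L L' assume L: "L \<in> axis_profiles d m" and L': "L' \<in> axis_profiles d m"
    and eq: "axial_set d L = axial_set d L'"
  show "L = L'"
  proof
    fix i show "L i = L' i"
    proof (cases "i < d")
      case True
      then have "c \<le> L i \<longleftrightarrow> c \<le> L' i" if "c \<noteq> 0" for c
        using that eq axis_point_in_axial_set_iff by metis
      from this[of "L i"] this[of "L' i"] show ?thesis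
        by (cases "L i = 0"; cases "L' i = 0") auto
    next
      case False
      with L L' show ?thesis by (simp add: axis_profiles_def)
    qed
  qed
qed

definition arm_lengths :: "nat \<Rightarrow> (nat \<Rightarrow> nat) set \<Rightarrow> nat \<Rightarrow> nat" where
  "arm_lengths d A i = (if i < d then card {c. c \<noteq> 0 \<and> axis_point i c \<in> A} else 0)"

lemma axis_point_in_lower_set_iff:
  assumes A: "lower_set d A" "finite A" and "i < d" "c \<noteq> 0"
  shows "axis_point i c \<in> A \<longleftrightarrow> c \<le> arm_lengths d A i"
proof -
  define C where "C = {c. c \<noteq> 0 \<and> axis_point i c \<in> A}"
  have "inj_on (axis_point i) C"
    by (rule inj_onI) (simp add: C_def axis_point_eq_iff)
  moreover have "axis_point i ` C \<subseteq> A"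
    by (auto simp: C_def)
  ultimately have fin: "finite C"
    using finite_subset[OF _ A(2)] finite_imageD by blast
  have "C = {1..Max C}" if "C \<noteq> {}"
  proof
    show "C \<subseteq> {1..Max C}"
    proof
      fix c assume c: "c \<in> C"
      then have "c \<noteq> 0"
        by (simp add: C_def)
      with Max_ge[OF fin c] show "c \<in> {1..Max C}"
        by simp
    qed
    have top: "axis_point i (Max C) \<in> A"
      using Max_in[OF fin that] unfolding C_def by blast
    have down: "axis_point i c \<in> A" if "c \<le> Max C" for c
      using axis_point_in_lower_set[OF A(1) top, of c i] that by (simp add: axis_point_def)
    show "{1..Max C} \<subseteq> C"
    proof
      fix c assume "c \<in> {1..Max C}"
      then show "c \<in> C"
        using down[of c] by (simp add: C_def)
    qed
  qed
  then have "C = {1..card C}"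
    by (cases "C = {}") (simp, metis card_atLeastAtMost diff_Suc_1)
  then have "c \<in> C \<longleftrightarrow> c \<in> {1..arm_lengths d A i}"
    using \<open>i < d\<close> by (simp only: arm_lengths_def C_def[symmetric] if_True)
  then show ?thesis
    using \<open>c \<noteq> 0\<close> by (simp add: C_def)
qed

lemma axial_lower_set_subset_axial_set:
  assumes A: "lower_set d A" "finite A" and axial: "\<forall>x\<in>A. card (supp x) \<le> 1"
  shows "A \<subseteq> axial_set d (arm_lengths d A)"
proof
  fix x assume x: "x \<in> A"
  then have x_zplus: "x \<in> zplus d"
    using lower_set_subset_zplus[OF A(1)] by blast
  from finite_supp[OF x_zplus] bspec[OF axial x] show "x \<in> axial_set d (arm_lengths d A)"
  proof (cases rule: card_supp_le_1_cases)
    case 1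
    then show ?thesis by (simp add: axial_set_def)
  next
    case (2 i)
    have "i < d"
    proof (rule ccontr)
      assume "\<not> i < d"
      with zplus_eq_0[OF x_zplus] \<open>x i \<noteq> 0\<close> show False by simp
    qed
    from x have "axis_point i (x i) \<in> A"
      by (simp only: 2(2)[symmetric])
    with \<open>i < d\<close> 2(1) have "axis_point i (x i) \<in> axial_set d (arm_lengths d A)"
      using axis_point_in_lower_set_iff[OF A] axis_point_in_axial_set_iff by blast
    then show ?thesis
      by (simp only: 2(2)[symmetric])
  qed
qed

lemma axial_set_subset_lower_set:
  assumes A: "lower_set d A" "finite A" "A \<noteq> {}"
  shows "axial_set d (arm_lengths d A) \<subseteq> A"
proof
  fix x assume "x \<in> axial_set d (arm_lengths d A)"
  then consider "x = origin" | i c where "i < d" "c \<in> {1..arm_lengths d A i}" "x = axis_point i c"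
    by (auto simp: axial_set_def)
  then show "x \<in> A"
  proof cases
    case 1
    with A show ?thesis
      using origin_in_lower_set by blast
  next
    case 2
    then show ?thesis
      using axis_point_in_lower_set_iff[OF A(1,2), of i c] by auto
  qed
qed

lemma axial_lower_set_eq_axial_set:
  assumes "A \<in> axial_lower_sets d (Suc m)"
  obtains L where "L \<in> axis_profiles d m" "A = axial_set d L"
proof -
  have A: "lower_set d A" "finite A" "card A = Suc m" and axial: "\<forall>x\<in>A. card (supp x) \<le> 1"
    using assms by (auto simp: axial_lower_sets_def lower_sets_def)
  then have "A \<noteq> {}"
    by auto
  have eq: "A = axial_set d (arm_lengths d A)"
    using axial_lower_set_subset_axial_set[OF A(1,2) axial] axial_set_subset_lower_set[OF A(1,2) \<open>A \<noteq> {}\<close>]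
    by (rule equalityI)
  then have "sum (arm_lengths d A) {..<d} = m"
    using arg_cong[OF eq, of card] A(3) card_axial_set[of d "arm_lengths d A"] by linarith
  then have "arm_lengths d A \<in> axis_profiles d m"
    by (simp add: axis_profiles_def arm_lengths_def)
  with eq show ?thesis
    using that by blast
qed

lemma bij_betw_axial_set: "bij_betw (axial_set d) (axis_profiles d m) (axial_lower_sets d (Suc m))"
  unfolding bij_betw_def
  using inj_on_axial_set axial_set_in_axial_lower_sets axial_lower_set_eq_axial_set by blast

lemma card_axis_profiles: "finite (axis_profiles d m) \<and> card (axis_profiles d m) = multichoose d m"
proof -
  let ?T = "{l::nat list. length l = d \<and> sum_list l = m}"
  let ?to_fun = "\<lambda>l i. if i < length l then l ! i else 0"
  have bij: "bij_betw (\<lambda>L. map L [0..<d]) (axis_profiles d m) ?T"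
  proof (rule bij_betw_byWitness[where f' = ?to_fun])
    show "\<forall>L\<in>axis_profiles d m. ?to_fun (map L [0..<d]) = L"
      by (auto simp: axis_profiles_def fun_eq_iff)
    show "\<forall>l\<in>?T. map (?to_fun l) [0..<d] = l"
      by (auto intro: nth_equalityI)
    show "(\<lambda>L. map L [0..<d]) ` axis_profiles d m \<subseteq> ?T"
      by (auto simp: axis_profiles_def sum_list_sum_nth atLeast0LessThan)
    have "sum (?to_fun l) {..<length l} = sum_list l" for l :: "nat list"
      by (simp add: sum_list_sum_nth atLeast0LessThan)
    then show "?to_fun ` ?T \<subseteq> axis_profiles d m"
      by (auto simp: axis_profiles_def)
  qed
  have "?T \<subseteq> {l. set l \<subseteq> {..m} \<and> length l = d}"
    using member_le_sum_list by fastforce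
  then have "finite ?T"
    by (rule finite_subset) (rule finite_lists_length_eq, simp)
  then show ?thesis
    using bij_betw_finite[OF bij] bij_betw_same_card[OF bij] card_length_sum_list[of d m]
    by (simp add: multichoose_def)
qed

lemma card_axial_lower_sets:
  "finite (axial_lower_sets d (Suc m)) \<and> card (axial_lower_sets d (Suc m)) = multichoose d m"
  using bij_betw_axial_set[of d m] card_axis_profiles[of d m] bij_betw_finite bij_betw_same_card
  by metis

lemma coordinate_less_card:
  assumes S: "lower_set d S" "finite S" and x: "x \<in> S"
  shows "x i < card S"
proof -
  have "inj_on (axis_point i) {0..x i}"
    by (rule inj_onI) (drule fun_cong[where x = i], simp add: axis_point_def)
  then have "card (axis_point i ` {0..x i}) = Suc (x i)"
    by (simp add: card_image)
  moreover have "axis_point i ` {0..x i} \<subseteq> S"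
    using axis_point_in_lower_set[OF S(1) x] by auto
  ultimately have "Suc (x i) \<le> card S"
    using card_mono[OF S(2)] by metis
  then show ?thesis
    by simp
qed

lemma finite_lower_sets: "finite (lower_sets d n)"
proof -
  let ?B = "{x. \<forall>i. (d \<le> i \<longrightarrow> x i = 0) \<and> x i < n}"
  let ?to_fun = "\<lambda>l i. if i < length l then l ! i else 0"
  have "?B \<subseteq> ?to_fun ` {l. set l \<subseteq> {..<n} \<and> length l = d}"
  proof
    fix x assume x: "x \<in> ?B"
    then have "x = ?to_fun (map x [0..<d])"
      by (auto simp: fun_eq_iff not_less)
    moreover have "map x [0..<d] \<in> {l. set l \<subseteq> {..<n} \<and> length l = d}"
      using x by auto
    ultimately show "x \<in> ?to_fun ` {l. set l \<subseteq> {..<n} \<and> length l = d}"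
      by blast
  qed
  then have "finite ?B"
    by (rule finite_subset) (intro finite_imageI finite_lists_length_eq finite_lessThan)
  moreover have "lower_sets d n \<subseteq> Pow ?B"
  proof
    fix S assume "S \<in> lower_sets d n"
    then have S: "lower_set d S" "finite S" "card S = n"
      by (auto simp: lower_sets_def)
    have "x \<in> ?B" if "x \<in> S" for x
    proof -
      have "x \<in> zplus d"
        using that lower_set_subset_zplus[OF S(1)] by blast
      then show ?thesis
        using coordinate_less_card[OF S(1,2) that] S(3) by (simp add: zplus_def)
    qed
    then show "S \<in> Pow ?B"
      by blast
  qed
  ultimately show ?thesis
    by (meson finite_Pow_iff finite_subset)
qed

lemma multichoose_le_p: "multichoose d m \<le> p d (Suc m)"
proof -
  have "axial_lower_sets d (Suc m) \<subseteq> lower_sets d (Suc m)"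
    by (auto simp: axial_lower_sets_def)
  then have "card (axial_lower_sets d (Suc m)) \<le> p d (Suc m)"
    unfolding p_eq_card_lower_sets by (rule card_mono[OF finite_lower_sets])
  then show ?thesis
    using card_axial_lower_sets[of d m] by simp
qed


section \<open>Decomposition of a lower set into levels\<close>

definition axial_part :: "(nat \<Rightarrow> nat) set \<Rightarrow> (nat \<Rightarrow> nat) set" where
  "axial_part S = {x \<in> S. card (supp x) \<le> 1}"

definition level :: "(nat \<Rightarrow> nat) set \<Rightarrow> nat \<Rightarrow> (nat \<Rightarrow> nat) set" where
  "level S s = {x \<in> S. card (supp x) = s}"

definition levels :: "nat \<Rightarrow> (nat \<Rightarrow> nat) set \<Rightarrow> (nat \<Rightarrow> nat) set list" where
  "levels d S = map (level S) [2..<Suc d]"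

definition pair_joins :: "(nat \<Rightarrow> nat) set \<Rightarrow> (nat \<Rightarrow> nat) set" where
  "pair_joins A = (\<lambda>P t. Max ((\<lambda>u. u t) ` P)) ` {P. P \<subseteq> A - {origin} \<and> card P = 2}"

definition axis_joins :: "(nat \<Rightarrow> nat) set \<Rightarrow> (nat \<Rightarrow> nat) set \<Rightarrow> (nat \<Rightarrow> nat) set" where
  "axis_joins A Y = (\<lambda>(y, u). sup y u) ` (Y \<times> (A - {origin}))"

lemma is_tower_map_upt:
  assumes "\<And>j. s \<le> j \<Longrightarrow> Suc j < t \<Longrightarrow> F (Suc j) \<subseteq> W (F j)" and "s < t \<Longrightarrow> F s \<subseteq> V"
  shows "is_tower W V (map F [s..<t])"
  using assms
proof (induction "t - s" arbitrary: s V)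
  case (Suc k)
  then have "[s..<t] = s # [Suc s..<t]"
    by (simp add: upt_conv_Cons)
  moreover have "is_tower W (W (F s)) (map F [Suc s..<t])"
    using Suc by simp
  moreover have "F s \<subseteq> V"
    using Suc by simp
  ultimately show ?case
    by simp
qed simp

lemma supp_mono:
  assumes "x' \<in> zplus d" "\<forall>i<d. x' i \<le> x i"
  shows "supp x' \<subseteq> supp x"
proof
  fix i assume "i \<in> supp x'"
  moreover from this have "i < d"
    using supp_subset_zplus[OF assms(1)] by blast
  ultimately show "i \<in> supp x"
    using assms(2) by (auto simp: supp_def)
qed

lemma lower_set_axial_part:
  assumes S: "lower_set d S"
  shows "lower_set d (axial_part S)"
  unfolding lower_set_def
proof (intro conjI ballI impI)
  show "axial_part S \<subseteq> zplus d"
    using lower_set_subset_zplus[OF S] by (auto simp: axial_part_def)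
next
  fix x x' assume x: "x \<in> axial_part S" and x': "x' \<in> zplus d" and le: "\<forall>i<d. x' i \<le> x i"
  have "x \<in> S" "x \<in> zplus d" "card (supp x) \<le> 1"
    using x lower_set_subset_zplus[OF S] by (auto simp: axial_part_def)
  moreover from this have "card (supp x') \<le> card (supp x)"
    using card_mono[OF finite_supp supp_mono[OF x' le]] by blast
  ultimately show "x' \<in> axial_part S"
    using lower_setD[OF S _ x' le] by (simp add: axial_part_def)
qed

lemma axis_point_in_axial_part:
  assumes "lower_set d S" "x \<in> S" "x i \<noteq> 0"
  shows "axis_point i (x i) \<in> axial_part S - {origin}"
  using axis_point_in_lower_set[OF assms(1,2) order_refl] assms(3)
  by (simp add: axial_part_def supp_axis_point axis_point_eq_origin_iff)

lemma level_2_subset_pair_joins: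
  assumes S: "lower_set d S"
  shows "level S 2 \<subseteq> pair_joins (axial_part S)"
proof
  fix x assume "x \<in> level S 2"
  then have x: "x \<in> S" and "card (supp x) = 2"
    by (auto simp: level_def)
  then obtain i j where ij: "supp x = {i, j}" "i \<noteq> j"
    unfolding card_2_iff by blast
  then have xi: "x i \<noteq> 0" and xj: "x j \<noteq> 0"
    unfolding supp_def by blast+
  let ?P = "{axis_point i (x i), axis_point j (x j)}"
  have "axis_point i (x i) \<noteq> axis_point j (x j)"
    using xi xj ij(2) by (simp add: axis_point_eq_iff)
  then have P: "?P \<subseteq> axial_part S - {origin} \<and> card ?P = 2"
    using axis_point_in_axial_part[OF S x] xi xj by simp
  have "x t = Max ((\<lambda>u. u t) ` ?P)" for t
  proof (cases "t = i \<or> t = j")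
    case False
    then have "x t = 0"
      using ij(1) unfolding supp_def by blast
    with False show ?thesis
      by (simp add: axis_point_def)
  qed (use ij(2) in \<open>auto simp: axis_point_def\<close>)
  then have "x = (\<lambda>t. Max ((\<lambda>u. u t) ` ?P))"
    by (rule ext)
  with P show "x \<in> pair_joins (axial_part S)"
    unfolding pair_joins_def by blast
qed

lemma level_Suc_subset_axis_joins:
  assumes S: "lower_set d S"
  shows "level S (Suc s) \<subseteq> axis_joins (axial_part S) (level S s)"
proof
  fix x assume "x \<in> level S (Suc s)"
  then have x: "x \<in> S" and card_x: "card (supp x) = Suc s"
    by (auto simp: level_def)
  have x_zplus: "x \<in> zplus d"
    using x lower_set_subset_zplus[OF S] by blast
  obtain k where k: "k \<in> supp x"
    using card_x by fastforce
  then have xk: "x k \<noteq> 0"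
    by (simp add: supp_def)
  have "x(k := 0) \<in> zplus d"
    using x_zplus by (simp add: zplus_def)
  then have "x(k := 0) \<in> S"
    by (rule lower_setD[OF S x]) simp
  moreover have "supp (x(k := 0)) = supp x - {k}"
    by (auto simp: supp_def)
  ultimately have "x(k := 0) \<in> level S s"
    using card_x k finite_supp[OF x_zplus] by (simp add: level_def)
  moreover have "x = sup (x(k := 0)) (axis_point k (x k))"
    by (auto simp: axis_point_def sup_nat_def fun_eq_iff)
  ultimately show "x \<in> axis_joins (axial_part S) (level S s)"
    using axis_point_in_axial_part[OF S x xk] unfolding axis_joins_def
    by (auto intro: image_eqI[where x = "(x(k := 0), axis_point k (x k))"])
qed

lemma set_levels: "set (levels d S) = level S ` {2..d}"
  by (auto simp: levels_def)

lemma union_axial_part_levels: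
  assumes S: "lower_set d S"
  shows "axial_part S \<union> \<Union>(set (levels d S)) = S"
proof -
  have "x \<in> axial_part S \<union> \<Union>(set (levels d S))" if x: "x \<in> S" for x
  proof -
    have "card (supp x) \<le> d"
      using x lower_set_subset_zplus[OF S] card_supp_le by blast
    then show ?thesis
      using x by (cases "card (supp x) \<le> 1") (auto simp: axial_part_def level_def set_levels)
  qed
  moreover have "axial_part S \<union> \<Union>(set (levels d S)) \<subseteq> S"
    by (auto simp: axial_part_def level_def set_levels)
  ultimately show ?thesis
    by blast
qed

lemma sum_card_levels:
  assumes S: "lower_set d S" "finite S"
  shows "sum_list (map card (levels d S)) = card S - card (axial_part S)"
proof -
  have "sum_list (map card (levels d S)) = (\<Sum>s\<in>{2..<Suc d}. card (level S s))"
    by (simp add: levels_def interv_sum_list_conv_sum_set_nat)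
  also have "\<dots> = card (\<Union>s\<in>{2..<Suc d}. level S s)"
    using S(2) by (intro card_UN_disjoint[symmetric]) (auto simp: level_def)
  also have "(\<Union>s\<in>{2..<Suc d}. level S s) = S - axial_part S"
    using union_axial_part_levels[OF S(1)] by (auto simp: set_levels axial_part_def level_def)
  also have "card (S - axial_part S) = card S - card (axial_part S)"
    using S(2) by (intro card_Diff_subset) (auto simp: axial_part_def)
  finally show ?thesis .
qed

lemma levels_in_towers:
  assumes S: "lower_set d S" "finite S"
  shows "levels d S \<in> towers (axis_joins (axial_part S)) (pair_joins (axial_part S)) (d - 1)
                         (card S - card (axial_part S))"
proof -
  have "is_tower (axis_joins (axial_part S)) (pair_joins (axial_part S)) (levels d S)"
    unfolding levels_def
    using level_2_subset_pair_joins[OF S(1)] level_Suc_subset_axis_joins[OF S(1)]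
    by (intro is_tower_map_upt) auto
  then show ?thesis
    using S(2) sum_card_levels[OF S] by (auto simp: towers_def levels_def level_def)
qed

lemma card_pair_joins:
  assumes "finite A"
  shows "finite (pair_joins A) \<and> card (pair_joins A) \<le> card (A - {origin}) choose 2"
proof -
  have fin: "finite (A - {origin})"
    using assms by simp
  then have "finite {P. P \<subseteq> A - {origin} \<and> card P = 2}"
    by (simp add: finite_subset[of _ "Pow (A - {origin})"] )
  then show ?thesis
    unfolding pair_joins_def using card_image_le n_subsets[OF fin, of 2] by fastforce
qed

lemma card_axis_joins:
  assumes "finite A" "finite Y"
  shows "finite (axis_joins A Y) \<and> card (axis_joins A Y) \<le> card (A - {origin}) * card Y"
proof -
  have "card (axis_joins A Y) \<le> card (Y \<times> (A - {origin}))"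
    unfolding axis_joins_def using assms by (intro card_image_le) simp
  then show ?thesis
    using assms by (simp add: axis_joins_def card_cartesian_product mult.commute)
qed

lemma card_towers_joins_le:
  assumes "A \<in> axial_lower_sets d (Suc m)"
  shows "finite (towers (axis_joins A) (pair_joins A) L r) \<and>
         card (towers (axis_joins A) (pair_joins A) L r) \<le> tower_bound m (m choose 2) r"
proof -
  have A: "lower_set d A" "finite A" "card A = Suc m"
    using assms by (auto simp: axial_lower_sets_def lower_sets_def)
  then have "A \<noteq> {}"
    by auto
  with A have card_A': "card (A - {origin}) = m"
    using origin_in_lower_set[OF A(1)] by simp
  then have fin: "finite (pair_joins A)" and card_pj: "card (pair_joins A) \<le> m choose 2"
    using card_pair_joins[OF A(2)] by auto
  have "finite (axis_joins A Y) \<and> card (axis_joins A Y) \<le> m * card Y" if "finite Y" for Y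
    using card_axis_joins[OF A(2) that] card_A' by simp
  then have T: "finite (towers (axis_joins A) (pair_joins A) L r) \<and>
      card (towers (axis_joins A) (pair_joins A) L r) \<le> tower_bound m (card (pair_joins A)) r"
    by (rule card_towers_le[OF fin])
  then show ?thesis
    using order_trans[OF conjunct2[OF T] tower_bound_mono[OF card_pj]] by blast
qed

lemma axial_part_in_axial_lower_sets:
  assumes "S \<in> lower_sets d n" "n \<ge> 1"
  obtains m where "m < n" "axial_part S \<in> axial_lower_sets d (Suc m)"
proof -
  have S: "lower_set d S" "finite S" "card S = n"
    using assms(1) by (auto simp: lower_sets_def)
  have sub: "axial_part S \<subseteq> S"
    by (auto simp: axial_part_def)
  have "S \<noteq> {}"
    using S(3) assms(2) by auto
  then have "origin \<in> axial_part S"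
    using origin_in_lower_set[OF S(1)] by (simp add: axial_part_def)
  then obtain m where m: "card (axial_part S) = Suc m"
    using finite_subset[OF sub S(2)] by (metis card_0_eq empty_iff not0_implies_Suc)
  moreover have "card (axial_part S) \<le> n"
    using card_mono[OF S(2) sub] S(3) by simp
  moreover have "axial_part S \<in> axial_lower_sets d (Suc m)"
    using lower_set_axial_part[OF S(1)] finite_subset[OF sub S(2)] m
    by (auto simp: axial_lower_sets_def lower_sets_def axial_part_def)
  ultimately show ?thesis
    using that[of m] by simp
qed

lemma p_le_sum_towers:
  assumes "n \<ge> 1"
  shows "p d n \<le> (\<Sum>m<n. multichoose d m * tower_bound m (m choose 2) (n - Suc m))"
proof -
  define T where "T A m = towers (axis_joins A) (pair_joins A) (d - 1) (n - Suc m)" for A m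
  let ?Sig = "SIGMA m:{..<n}. SIGMA A:axial_lower_sets d (Suc m). T A m"
  have T: "finite (T A m) \<and> card (T A m) \<le> tower_bound m (m choose 2) (n - Suc m)"
    if "A \<in> axial_lower_sets d (Suc m)" for A m
    unfolding T_def by (rule card_towers_joins_le[OF that])
  have fin_Sig: "finite ?Sig"
    using card_axial_lower_sets T by (auto intro!: finite_SigmaI)
  have "lower_sets d n \<subseteq> (\<lambda>(m, A, Ys). A \<union> \<Union>(set Ys)) ` ?Sig"
  proof
    fix S assume S: "S \<in> lower_sets d n"
    then have S': "lower_set d S" "finite S" "card S = n"
      by (auto simp: lower_sets_def)
    obtain m where m: "m < n" "axial_part S \<in> axial_lower_sets d (Suc m)"
      using axial_part_in_axial_lower_sets[OF S assms] .
    then have "card (axial_part S) = Suc m"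
      by (simp add: axial_lower_sets_def lower_sets_def)
    then have "levels d S \<in> T (axial_part S) m"
      using levels_in_towers[OF S'(1,2)] S'(3) by (simp add: T_def)
    with m show "S \<in> (\<lambda>(m, A, Ys). A \<union> \<Union>(set Ys)) ` ?Sig"
      using union_axial_part_levels[OF S'(1)]
      by (intro image_eqI[where x = "(m, axial_part S, levels d S)"]) auto
  qed
  then have "p d n \<le> card ((\<lambda>(m, A, Ys). A \<union> \<Union>(set Ys)) ` ?Sig)"
    unfolding p_eq_card_lower_sets using fin_Sig by (intro card_mono) auto
  also have "\<dots> \<le> card ?Sig"
    using fin_Sig by (rule card_image_le)
  also have "\<dots> = (\<Sum>m<n. \<Sum>A\<in>axial_lower_sets d (Suc m). card (T A m))"
    using card_axial_lower_sets T by (simp add: card_SigmaI finite_SigmaI)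
  also have "\<dots> \<le> (\<Sum>m<n. \<Sum>A\<in>axial_lower_sets d (Suc m). tower_bound m (m choose 2) (n - Suc m))"
    using T by (intro sum_mono) auto
  also have "\<dots> = (\<Sum>m<n. multichoose d m * tower_bound m (m choose 2) (n - Suc m))"
    using card_axial_lower_sets by simp
  finally show ?thesis .
qed


section \<open>Lower sets from graphs\<close>

lemma lower_set_indicators:
  assumes bounded: "\<forall>Q\<in>F. Q \<subseteq> {..<d}" and down: "\<forall>Q\<in>F. \<forall>R. R \<subseteq> Q \<longrightarrow> R \<in> F"
  shows "lower_set d ((\<lambda>Q. indicator Q :: nat \<Rightarrow> nat) ` F)"
  unfolding lower_set_def
proof (intro conjI ballI impI)
  have "indicator Q \<in> zplus d" if "Q \<in> F" for Q
  proof -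
    have "i \<notin> Q" if "d \<le> i" for i
      using bounded \<open>Q \<in> F\<close> that by fastforce
    then show ?thesis
      by (simp add: zplus_def indicator_eq_0_iff)
  qed
  then show "(\<lambda>Q. indicator Q) ` F \<subseteq> zplus d"
    by blast
next
  fix x x' assume "x \<in> (\<lambda>Q. indicator Q) ` F" and x': "x' \<in> zplus d" and le: "\<forall>i<d. x' i \<le> x i"
  then obtain Q where Q: "Q \<in> F" "x = indicator Q"
    by blast
  have x'_values: "x' t = 0 \<or> (x' t = 1 \<and> t \<in> Q)" for t
  proof (cases "t < d")
    case True
    with le Q(2) show ?thesis
      by (cases "t \<in> Q") auto
  qed (use zplus_eq_0[OF x'] in simp)
  have "x' = indicator {t. x' t \<noteq> 0}"
  proof
    fix t show "x' t = indicator {t. x' t \<noteq> 0} t"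
      using x'_values[of t] by auto
  qed
  moreover have "{t. x' t \<noteq> 0} \<subseteq> Q"
  proof
    fix t assume "t \<in> {t. x' t \<noteq> 0}"
    then show "t \<in> Q"
      using x'_values[of t] by auto
  qed
  moreover from this have "{t. x' t \<noteq> 0} \<in> F"
    using down Q(1) by blast
  ultimately show "x' \<in> (\<lambda>Q. indicator Q) ` F"
    by blast
qed

definition edges :: "nat \<Rightarrow> nat set set" where
  "edges K = {P. P \<subseteq> {..<K} \<and> card P = 2}"

definition graph_family :: "nat \<Rightarrow> nat set set \<Rightarrow> nat set set" where
  "graph_family K E = insert {} ((\<lambda>i. {i}) ` {..<K}) \<union> E"

lemma graph_family_downward_closed:
  assumes "E \<subseteq> edges K" "Q \<in> graph_family K E" "R \<subseteq> Q"
  shows "R \<in> graph_family K E"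
proof (cases "Q \<in> E")
  case True
  then have Q: "Q \<subseteq> {..<K}" "finite Q" "card Q = 2"
    using assms(1) finite_subset[of Q "{..<K}"] by (auto simp: edges_def)
  then have "card R \<le> 2"
    using card_mono assms(3) by fastforce
  then consider "card R = 0" | "card R = 1" | "card R = 2"
    by linarith
  then show ?thesis
  proof cases
    case 1
    then have "R = {}"
      using finite_subset[OF assms(3) Q(2)] by simp
    then show ?thesis by (simp add: graph_family_def)
  next
    case 2
    then obtain i where "R = {i}"
      by (rule card_1_singletonE)
    with Q(1) assms(3) show ?thesis
      by (auto simp: graph_family_def)
  next
    case 3
    then have "R = Q"
      using card_subset_eq[OF Q(2) assms(3)] Q(3) by simp
    with True show ?thesis
      by (simp add: graph_family_def)
  qed
next
  case False
  with assms(2,3) show ?thesis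
    by (auto simp: graph_family_def subset_singleton_iff)
qed

lemma card_graph_family:
  assumes "E \<subseteq> edges K"
  shows "finite (graph_family K E) \<and> card (graph_family K E) = Suc (K + card E)"
proof -
  have fin_E: "finite E"
    using assms by (rule finite_subset) (auto simp: edges_def)
  have "card ((\<lambda>i. {i}) ` {..<K}) = K"
    by (subst card_image) (auto intro: inj_onI)
  moreover have "{} \<notin> (\<lambda>i. {i}) ` {..<K} \<union> E" and "(\<lambda>i. {i}) ` {..<K} \<inter> E = {}"
    using assms by (auto simp: edges_def)
  ultimately show ?thesis
    using fin_E by (simp add: graph_family_def card_Un_disjoint)
qed

lemma inj_on_indicator: "inj_on (\<lambda>Q. indicator Q :: 'a \<Rightarrow> 'b::zero_neq_one) X"
  by (rule inj_onI) (metis indicator_eq_1_iff subsetI subset_antisym)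

lemma indicators_graph_family_in_lower_sets:
  assumes "E \<subseteq> edges K" "card E = n - Suc K" "K \<le> d" "K < n"
  shows "(\<lambda>Q. indicator Q :: nat \<Rightarrow> nat) ` graph_family K E \<in> lower_sets d n"
proof -
  have "Q \<subseteq> {..<K}" if "Q \<in> graph_family K E" for Q
    using that assms(1) unfolding graph_family_def edges_def by blast
  then have "\<forall>Q\<in>graph_family K E. Q \<subseteq> {..<d}"
    using assms(3) by fastforce
  then have "lower_set d ((\<lambda>Q. indicator Q :: nat \<Rightarrow> nat) ` graph_family K E)"
    using graph_family_downward_closed[OF assms(1)] by (intro lower_set_indicators) auto
  moreover have "card ((\<lambda>Q. indicator Q :: nat \<Rightarrow> nat) ` graph_family K E) = n"
    using card_graph_family[OF assms(1)] card_image[OF inj_on_indicator[of "graph_family K E"]] assms(2,4) by simp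
  ultimately show ?thesis
    using card_graph_family[OF assms(1)] by (simp add: lower_sets_def)
qed

lemma binomial_edges_le_p:
  assumes "K \<le> d" "K < n"
  shows "(K choose 2) choose (n - Suc K) \<le> p d n"
proof -
  let ?Es = "{E. E \<subseteq> edges K \<and> card E = n - Suc K}"
  let ?G = "\<lambda>E. (\<lambda>Q. indicator Q :: nat \<Rightarrow> nat) ` graph_family K E"
  have fin_edges: "finite (edges K)"
    by (rule finite_subset[of _ "Pow {..<K}"]) (auto simp: edges_def)
  have "inj_on ?G ?Es"
  proof (rule inj_onI)
    fix E E' assume E: "E \<in> ?Es" and E': "E' \<in> ?Es" and eq: "?G E = ?G E'"
    have edges_of: "X = {P \<in> graph_family K X. card P = 2}" if "X \<subseteq> edges K" for X
      using that by (auto simp: graph_family_def edges_def)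
    have "graph_family K E = graph_family K E'"
      using eq inj_on_indicator by (metis inj_on_image_eq_iff subset_UNIV)
    then show "E = E'"
      using edges_of[of E] edges_of[of E'] E E' by simp
  qed
  moreover have "?G ` ?Es \<subseteq> lower_sets d n"
    using indicators_graph_family_in_lower_sets assms by blast
  ultimately have "card ?Es \<le> p d n"
    unfolding p_eq_card_lower_sets by (intro card_inj_on_le[OF _ _ finite_lower_sets])
  moreover have "card ?Es = (K choose 2) choose (n - Suc K)"
    using n_subsets[OF fin_edges] n_subsets[of "{..<K}" 2] by (simp add: edges_def)
  ultimately show ?thesis
    by simp
qed


section \<open>Numerical estimates\<close>

lemma multichoose_pos: "d \<ge> 1 \<Longrightarrow> multichoose d k > 0"
  by (simp add: multichoose_def)

lemma multichoose_mono: "d \<le> D \<Longrightarrow> multichoose d k \<le> multichoose D k"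
  unfolding multichoose_def by (rule binomial_right_mono) simp

lemma multichoose_Suc:
  assumes "d \<ge> 1"
  shows "multichoose d (Suc k) * Suc k = (k + d) * multichoose d k"
proof -
  have "Suc (k + d - 1) = k + d" "Suc k + d - 1 = Suc (k + d - 1)"
    using assms by auto
  then show ?thesis
    unfolding multichoose_def using Suc_times_binomial_eq[of "k + d - 1" k] by metis
qed

lemma multichoose_fact_bounds:
  assumes "d \<ge> 1"
  shows "d ^ k \<le> multichoose d k * fact k \<and> multichoose d k * fact k \<le> (d + k) ^ k"
proof (induction k)
  case (Suc k)
  have "multichoose d (Suc k) * fact (Suc k) = (multichoose d (Suc k) * Suc k) * fact k"
    by (simp add: algebra_simps)
  also have "\<dots> = (k + d) * (multichoose d k * fact k)"
    using multichoose_Suc[OF assms, of k] by (metis mult.assoc)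
  finally have eq: "multichoose d (Suc k) * fact (Suc k) = (k + d) * (multichoose d k * fact k)" .
  have "d ^ Suc k \<le> (k + d) * (multichoose d k * fact k)"
    using Suc.IH by (simp add: mult_le_mono)
  moreover have "(k + d) * (multichoose d k * fact k) \<le> (d + Suc k) * (d + k) ^ k"
    using Suc.IH by (intro mult_le_mono) auto
  moreover have "(d + k) ^ k \<le> (d + Suc k) ^ k"
    by (rule power_mono) auto
  ultimately show ?case
    unfolding eq by (metis le_trans mult_le_mono2 power_Suc)
qed (simp add: multichoose_def)

lemma multichoose_diff_le:
  assumes "d \<ge> 1" "j \<le> k"
  shows "real (multichoose d (k - j)) \<le> real (multichoose d k) * (real k / real d) ^ j"
  using assms(2)
proof (induction j)
  case (Suc j)
  have step: "real (multichoose d i) \<le> real (multichoose d (Suc i)) * (real k / real d)" if "Suc i \<le> k" for i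
  proof -
    have "multichoose d i * d \<le> (i + d) * multichoose d i"
      by simp
    also have "\<dots> = multichoose d (Suc i) * Suc i"
      using multichoose_Suc[OF assms(1)] by simp
    also have "\<dots> \<le> multichoose d (Suc i) * k"
      using that by (rule mult_le_mono2)
    finally have "multichoose d i * d \<le> multichoose d (Suc i) * k" .
    then have "real (multichoose d i) * real d \<le> real (multichoose d (Suc i)) * real k"
      by (metis of_nat_le_iff of_nat_mult)
    then show ?thesis
      using assms(1) by (simp add: field_simps)
  qed
  have "real (multichoose d (k - Suc j)) \<le> real (multichoose d (k - j)) * (real k / real d)"
    using step[of "k - Suc j"] Suc.prems by (simp add: Suc_diff_Suc)
  also have "\<dots> \<le> real (multichoose d k) * (real k / real d) ^ j * (real k / real d)"
    using Suc by (intro mult_right_mono) auto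
  finally show ?case
    by (simp add: mult_ac)
qed simp

definition tower_weight :: "nat \<Rightarrow> nat \<Rightarrow> real" where
  "tower_weight n j = (if j = 0 then 1 else (real n ^ 2) ^ j / (2 * fact j))"

lemma tower_bound_le_tower_weight: "real (tower_bound m (m choose 2) j) \<le> tower_weight (Suc m + j) j"
proof (cases "j = 0")
  case False
  define M where "M = (m choose 2) + m * j"
  define x where "x = real (Suc m + j) ^ 2"
  have "2 * (m choose 2) \<le> m * m"
    unfolding choose_two using times_div_less_eq_dividend[of 2 "m * (m - 1)"]
    by (meson diff_le_self le_trans mult_le_mono2)
  then have "2 * M \<le> (Suc m + j) ^ 2"
    by (simp add: M_def power2_eq_square algebra_simps)
  then have "2 * real M \<le> x"
    unfolding x_def by (metis of_nat_le_iff of_nat_mult of_nat_numeral of_nat_power)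
  then have "real M ^ j \<le> (x / 2) ^ j"
    by (intro power_mono) auto
  moreover have "real (M choose j) * fact j \<le> real M ^ j"
    using binomial_fact_pow[of M j] by (metis of_nat_fact of_nat_le_iff of_nat_mult of_nat_power)
  ultimately have "real (M choose j) * fact j \<le> (x / 2) ^ j"
    by linarith
  then have "real (M choose j) \<le> (x / 2) ^ j / fact j"
    by (subst pos_le_divide_eq) auto
  have "real (tower_bound m (m choose 2) j) \<le> 2 ^ (j - 1) * real (M choose j)"
    using False by (simp add: tower_bound_def M_def mult.commute)
  also have "\<dots> \<le> 2 ^ (j - 1) * ((x / 2) ^ j / fact j)"
    using \<open>real (M choose j) \<le> (x / 2) ^ j / fact j\<close> by (intro mult_left_mono) auto
  also have "\<dots> = x ^ j / (2 * fact j)"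
  proof -
    have "(2::real) ^ j = 2 * 2 ^ (j - 1)"
      using False by (cases j) auto
    then show ?thesis
      by (simp add: power_divide)
  qed
  finally show ?thesis
    using False by (simp add: tower_weight_def x_def)
qed (simp add: tower_bound_def tower_weight_def)

lemma tower_weight_nonneg: "tower_weight n j \<ge> 0"
  by (simp add: tower_weight_def)

lemma p_Suc_le_multichoose_sum:
  assumes "1 \<le> d" "d \<le> D"
  shows "real (p d (Suc k)) \<le> real (multichoose D k) * (\<Sum>j\<le>k. (real k / real D) ^ j * tower_weight (Suc k) j)"
proof -
  have "real (p d (Suc k)) \<le> real (\<Sum>m<Suc k. multichoose d m * tower_bound m (m choose 2) (Suc k - Suc m))"
    using p_le_sum_towers[of "Suc k" d] by (simp only: of_nat_le_iff)
  also have "\<dots> = (\<Sum>m<Suc k. real (multichoose d m) * real (tower_bound m (m choose 2) (k - m)))"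
    by simp
  also have "\<dots> = (\<Sum>j<Suc k. real (multichoose d (k - j)) * real (tower_bound (k - j) ((k - j) choose 2) j))"
    by (rule sum.reindex_bij_witness[of _ "\<lambda>j. k - j" "\<lambda>j. k - j"]) auto
  also have "\<dots> \<le> (\<Sum>j<Suc k. (real (multichoose D k) * (real k / real D) ^ j) * tower_weight (Suc k) j)"
  proof (rule sum_mono)
    fix j assume "j \<in> {..<Suc k}"
    then have j: "j \<le> k"
      by simp
    have "real (multichoose d (k - j)) \<le> real (multichoose D (k - j))"
      using multichoose_mono[OF assms(2)] by simp
    also have "\<dots> \<le> real (multichoose D k) * (real k / real D) ^ j"
      using multichoose_diff_le[OF _ j] assms by simp
    finally have "real (multichoose d (k - j)) \<le> real (multichoose D k) * (real k / real D) ^ j" .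
    moreover have "real (tower_bound (k - j) ((k - j) choose 2) j) \<le> tower_weight (Suc k) j"
      using tower_bound_le_tower_weight[of "k - j" j] j by simp
    ultimately show "real (multichoose d (k - j)) * real (tower_bound (k - j) ((k - j) choose 2) j)
        \<le> (real (multichoose D k) * (real k / real D) ^ j) * tower_weight (Suc k) j"
      by (intro mult_mono) auto
  qed
  also have "\<dots> = real (multichoose D k) * (\<Sum>j\<le>k. (real k / real D) ^ j * tower_weight (Suc k) j)"
    unfolding lessThan_Suc_atMost sum_distrib_left by (simp only: mult.assoc)
  finally show ?thesis .
qed

lemma two_power_le_fact_Suc: "(2::nat) ^ j \<le> fact (Suc j)"
proof (induction j)
  case (Suc j)
  have "(2::nat) ^ Suc j \<le> 2 * fact (Suc j)"
    using Suc.IH by simp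
  also have "\<dots> \<le> Suc (Suc j) * fact (Suc j)"
    by (intro mult_right_mono) auto
  finally show ?case
    by simp
qed simp

lemma tower_weight_le_power: "tower_weight n j \<le> (real n ^ 2 / 2) ^ j"
proof (cases "j = 0")
  case False
  then obtain i where j: "j = Suc i"
    using not0_implies_Suc by blast
  have "real (2 ^ i) \<le> real (fact j)"
    using two_power_le_fact_Suc[of i] unfolding j by (simp only: of_nat_le_iff)
  then have "(2::real) ^ j \<le> 2 * fact j"
    unfolding j by (simp add: algebra_simps)
  then have "(real n ^ 2) ^ j / (2 * fact j) \<le> (real n ^ 2) ^ j / 2 ^ j"
    by (intro divide_left_mono) auto
  with False show ?thesis
    by (simp add: tower_weight_def power_divide)
qed (simp add: tower_weight_def)

lemma tower_weight_le_power_div_fact: "tower_weight n j \<le> (real n ^ 2) ^ j / fact j"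
  by (auto simp: tower_weight_def intro: divide_left_mono)

lemma sum_power_div_fact_le_exp:
  fixes x :: real
  assumes "x \<ge> 0"
  shows "(\<Sum>j\<le>k. x ^ j / fact j) \<le> exp x"
proof -
  have "(\<lambda>j. x ^ j /\<^sub>R fact j) sums exp x"
    by (rule exp_converges)
  then have "sum (\<lambda>j. x ^ j /\<^sub>R fact j) {..k} \<le> exp x"
    using assms sum_le_suminf[of "\<lambda>j. x ^ j /\<^sub>R fact j" "{..k}"] by (auto simp: sums_iff)
  then show ?thesis
    by (simp add: divide_inverse mult.commute)
qed

lemma p_Suc_le_multichoose_geometric:
  assumes "d \<ge> 1"
  shows "real (p d (Suc k)) \<le> real (multichoose d k) * (\<Sum>j\<le>k. (real (Suc k) ^ 3 / (2 * real d)) ^ j)"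
proof -
  have "(real k / real d) ^ j * tower_weight (Suc k) j \<le> (real (Suc k) ^ 3 / (2 * real d)) ^ j" for j
  proof -
    have "(real k / real d) ^ j \<le> (real (Suc k) / real d) ^ j"
      by (intro power_mono divide_right_mono) auto
    then have "(real k / real d) ^ j * tower_weight (Suc k) j \<le> (real (Suc k) / real d) ^ j * (real (Suc k) ^ 2 / 2) ^ j"
      using tower_weight_le_power[of "Suc k" j] tower_weight_nonneg
      by (intro mult_mono) (auto simp del: of_nat_Suc)
    also have "\<dots> = (real (Suc k) ^ 3 / (2 * real d)) ^ j"
      by (simp only: power_mult_distrib[symmetric]) (simp add: power2_eq_square power3_eq_cube mult_ac del: of_nat_Suc)
    finally show ?thesis .
  qed
  then have "(\<Sum>j\<le>k. (real k / real d) ^ j * tower_weight (Suc k) j) \<le> (\<Sum>j\<le>k. (real (Suc k) ^ 3 / (2 * real d)) ^ j)"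
    by (intro sum_mono)
  then show ?thesis
    using p_Suc_le_multichoose_sum[OF assms order_refl, of k] mult_left_mono[OF _ of_nat_0_le_iff]
    by (meson order_trans)
qed

lemma p_Suc_le_multichoose_exp:
  assumes "1 \<le> d" "d \<le> D"
  shows "real (p d (Suc k)) \<le> real (multichoose D k) * exp (real (Suc k) ^ 3 / real D)"
proof -
  have "(real k / real D) ^ j * tower_weight (Suc k) j \<le> (real (Suc k) ^ 3 / real D) ^ j / fact j" for j
  proof -
    have "(real k / real D) ^ j \<le> (real (Suc k) / real D) ^ j"
      by (intro power_mono divide_right_mono) auto
    then have "(real k / real D) ^ j * tower_weight (Suc k) j \<le> (real (Suc k) / real D) ^ j * ((real (Suc k) ^ 2) ^ j / fact j)"
      using tower_weight_le_power_div_fact[of "Suc k" j] tower_weight_nonneg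
      by (intro mult_mono) (auto simp del: of_nat_Suc)
    also have "\<dots> = (real (Suc k) ^ 3 / real D) ^ j / fact j"
      by (simp only: times_divide_eq_right power_mult_distrib[symmetric])
        (simp add: power2_eq_square power3_eq_cube mult_ac del: of_nat_Suc)
    finally show ?thesis .
  qed
  then have "(\<Sum>j\<le>k. (real k / real D) ^ j * tower_weight (Suc k) j) \<le> (\<Sum>j\<le>k. (real (Suc k) ^ 3 / real D) ^ j / fact j)"
    by (intro sum_mono)
  also have "\<dots> \<le> exp (real (Suc k) ^ 3 / real D)"
    by (rule sum_power_div_fact_le_exp) simp
  finally show ?thesis
    using p_Suc_le_multichoose_sum[OF assms, of k] mult_left_mono[OF _ of_nat_0_le_iff]
    by (meson order_trans)
qed

lemma ln_add_one_minus_ln_bounds: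
  fixes x :: real
  assumes "x > 0"
  shows "1 / (x + 1) \<le> ln (x + 1) - ln x" and "ln (x + 1) - ln x \<le> 1 / x"
proof -
  have "ln (x / (x + 1)) \<le> x / (x + 1) - 1"
    using assms by (intro ln_le_minus_one) simp
  then show "1 / (x + 1) \<le> ln (x + 1) - ln x"
    using assms by (simp add: ln_div field_simps)
  have "ln ((x + 1) / x) \<le> (x + 1) / x - 1"
    using assms by (intro ln_le_minus_one) simp
  then show "ln (x + 1) - ln x \<le> 1 / x"
    using assms by (simp add: ln_div field_simps)
qed

lemma ln_fact_bounds:
  assumes "k \<ge> 1"
  shows "real k * ln (real k) - real k \<le> ln (fact k) \<and> ln (fact k) \<le> (real k + 1) * ln (real k) - real k + 1"
  using assms
proof (induction k rule: dec_induct)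
  case (step k)
  have k: "real k > 0"
    using step.hyps by simp
  have ln_fact: "ln (fact (Suc k) :: real) = ln (real k + 1) + ln (fact k)"
    by (simp add: ln_mult add.commute)
  have "real k * (ln (real k + 1) - ln (real k)) \<le> 1"
    using ln_add_one_minus_ln_bounds(2)[OF k] k by (simp add: field_simps)
  moreover have "1 \<le> (real k + 1) * (ln (real k + 1) - ln (real k))"
    using ln_add_one_minus_ln_bounds(1)[OF k] k by (simp add: field_simps)
  ultimately show ?case
    using step.IH unfolding ln_fact by (simp add: algebra_simps)
qed simp

lemma ln_p_Suc_ge:
  assumes "k \<ge> 1" "d \<ge> 1"
  shows "real k * ln (real d) - (real k + 1) * ln (real k) + real k - 1 \<le> ln (real (p d (Suc k)))"
proof -
  have mc_pos: "real (multichoose d k) > 0"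
    using multichoose_pos[OF assms(2)] by simp
  have "real (d ^ k) \<le> real (multichoose d k * fact k)"
    using multichoose_fact_bounds[OF assms(2)] by (simp only: of_nat_le_iff)
  then have "real d ^ k \<le> real (multichoose d k) * fact k"
    by simp
  then have "ln (real d ^ k) \<le> ln (real (multichoose d k) * fact k)"
    using assms(2) by (intro ln_mono) auto
  then have "real k * ln (real d) \<le> ln (real (multichoose d k)) + ln (fact k)"
    using assms(2) mc_pos by (simp add: ln_mult ln_realpow)
  moreover have "ln (real (multichoose d k)) \<le> ln (real (p d (Suc k)))"
    using multichoose_le_p[of d k] mc_pos by simp
  ultimately show ?thesis
    using ln_fact_bounds[OF assms(1)] by linarith
qed

lemma ln_p_Suc_le:
  assumes "k \<ge> 1" "1 \<le> d" "d \<le> D"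
  shows "ln (real (p d (Suc k)))
         \<le> real k * ln (real D + real k) - real k * ln (real k) + real k + real (Suc k) ^ 3 / real D"
proof -
  have mc_pos: "real (multichoose D k) > 0"
    using multichoose_pos assms by simp
  have p_pos: "real (p d (Suc k)) > 0"
    using less_le_trans[OF multichoose_pos[OF assms(2)] multichoose_le_p] by simp
  have "real (multichoose D k * fact k) \<le> real ((D + k) ^ k)"
    using multichoose_fact_bounds[of D k] assms by (simp only: of_nat_le_iff)
  then have "real (multichoose D k) * fact k \<le> (real D + real k) ^ k"
    by simp
  then have "ln (real (multichoose D k) * fact k) \<le> ln ((real D + real k) ^ k)"
    using mc_pos by (intro ln_mono) auto
  then have "ln (real (multichoose D k)) + ln (fact k) \<le> real k * ln (real D + real k)"
    using mc_pos assms by (simp add: ln_mult ln_realpow)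
  moreover have "ln (real (p d (Suc k))) \<le> ln (real (multichoose D k) * exp (real (Suc k) ^ 3 / real D))"
    using p_Suc_le_multichoose_exp[OF assms(2,3), of k] p_pos by (intro ln_mono) auto
  then have "ln (real (p d (Suc k))) \<le> ln (real (multichoose D k)) + real (Suc k) ^ 3 / real D"
    using mc_pos by (simp add: ln_mult)
  ultimately show ?thesis
    using ln_fact_bounds[OF assms(1)] by simp
qed


section \<open>Asymptotics\<close>

lemma p_div_binomial_bounds:
  assumes "n \<ge> 1" "d \<ge> 1" "real d > real n ^ 3 / 2"
  shows "1 \<le> real (p d n) / real ((d + n - 2) choose (d - 1)) \<and>
         real (p d n) / real ((d + n - 2) choose (d - 1)) < 1 / (1 - real n ^ 3 / (2 * real d))"
proof -
  obtain k where n: "n = Suc k"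
    using assms(1) by (cases n) auto
  define r where "r = real n ^ 3 / (2 * real d)"
  have r: "0 < r" "r < 1"
    using assms by (auto simp: r_def field_simps)
  have binom: "(d + n - 2) choose (d - 1) = multichoose d k"
    unfolding multichoose_def n using binomial_symmetric[of k "k + d - 1"] assms(2)
    by (simp add: add.commute)
  have mc_pos: "real (multichoose d k) > 0"
    using multichoose_pos[OF assms(2)] by simp
  have "(\<Sum>j\<le>k. r ^ j) = (1 - r ^ Suc k) / (1 - r)"
    using r sum_gp_strict[of r "Suc k"] by (simp add: lessThan_Suc_atMost)
  also have "\<dots> < 1 / (1 - r)"
    using r by (intro divide_strict_right_mono) auto
  finally have "real (multichoose d k) * (\<Sum>j\<le>k. r ^ j) < real (multichoose d k) * (1 / (1 - r))"
    using mc_pos by (rule mult_strict_left_mono)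
  then have "real (p d n) < real (multichoose d k) * (1 / (1 - r))"
    using p_Suc_le_multichoose_geometric[OF assms(2), of k] unfolding n r_def by linarith
  moreover have "real (multichoose d k) \<le> real (p d n)"
    unfolding n of_nat_le_iff by (rule multichoose_le_p)
  ultimately show ?thesis
    using mc_pos unfolding binom r_def by (simp add: field_simps)
qed

lemma ln_p_approx:
  assumes "n \<ge> 2" "d \<ge> 1"
  shows "\<bar>ln (real (p d n)) - (real n - 1) * (ln (real d) - ln (real n) + 1)\<bar>
         \<le> 2 * real n ^ 3 / real d + 1 + ln (real n)"
proof -
  obtain k where n: "n = Suc k" and k: "k \<ge> 1"
    using assms(1) by (cases n) auto
  define x where "x = real k"
  have x: "x \<ge> 1" "real n = x + 1"
    using k by (auto simp: x_def n)
  have d: "real d \<ge> 1"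
    using assms(2) by simp
  have upper: "ln (real (p d n)) \<le> x * ln (real d + x) - x * ln x + x + real n ^ 3 / real d"
    using ln_p_Suc_le[OF k assms(2) order_refl] unfolding n[symmetric] x_def[symmetric] .
  have lower: "x * ln (real d) - (x + 1) * ln x + x - 1 \<le> ln (real (p d n))"
    using ln_p_Suc_ge[OF k assms(2)] unfolding n[symmetric] x_def[symmetric] .
  have "ln (real d + x) - ln (real d) \<le> x / real d"
    using ln_le_minus_one[of "(real d + x) / real d"] d x by (simp add: ln_div field_simps)
  then have "x * (ln (real d + x) - ln (real d)) \<le> x * (x / real d)"
    using x by (intro mult_left_mono) auto
  also have "\<dots> \<le> real n ^ 3 / real d"
  proof -
    have "x * x \<le> (x + 1) * (x + 1)"
      using x by (intro mult_mono) auto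
    also have "\<dots> \<le> (x + 1) * (x + 1) * (x + 1)"
      using x mult_left_mono[of 1 "x + 1" "(x + 1) * (x + 1)"] by simp
    finally show ?thesis
      unfolding x(2) power3_eq_cube times_divide_eq_right using d by (intro divide_right_mono) auto
  qed
  finally have "x * ln (real d + x) - x * ln (real d) \<le> real n ^ 3 / real d"
    by (simp add: right_diff_distrib)
  moreover have "x * ln (x + 1) - x * ln x \<le> 1" and "0 \<le> x * ln (x + 1) - x * ln x"
    using ln_add_one_minus_ln_bounds[of x] x by (auto simp: field_simps)
  moreover have "ln x \<le> ln (real n)" and "ln (real n) \<ge> 0"
    using x assms(1) by auto
  moreover have "(real n - 1) * (ln (real d) - ln (real n) + 1) = x * ln (real d) - x * ln (x + 1) + x"
    and "(x + 1) * ln x = x * ln x + ln x" and "2 * real n ^ 3 / real d = 2 * (real n ^ 3 / real d)"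
    and "real n ^ 3 / real d \<ge> 0"
    using x by (auto simp: algebra_simps)
  ultimately show ?thesis
    using upper lower x(2) unfolding abs_le_iff by linarith
qed

lemma ln_p_asymp_superquadratic:
  assumes dpos: "\<forall>n\<ge>1. d n \<ge> 1"
    and lim: "filterlim (\<lambda>n. real (d n) / real n ^ 2) at_top sequentially"
  shows "(\<lambda>n. ln (real (p (d n) n)) - (real n - 1) * (ln (real (d n)) - ln (real n) + 1)) \<in> o(\<lambda>n. real n)"
proof (rule landau_o.smallI)
  fix c :: real assume c: "c > 0"
  have "(\<lambda>n. 1 + ln (real n)) \<in> o(\<lambda>n. real n)"
    by real_asymp
  then have "\<forall>\<^sub>F n in sequentially. \<bar>1 + ln (real n)\<bar> \<le> c / 2 * \<bar>real n\<bar>"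
    using c by (auto dest: landau_o.smallD[where c = "c / 2"])
  moreover have "\<forall>\<^sub>F n in sequentially. 4 / c \<le> real (d n) / real n ^ 2"
    using lim by (simp add: filterlim_at_top)
  ultimately show "\<forall>\<^sub>F n in sequentially.
      norm (ln (real (p (d n) n)) - (real n - 1) * (ln (real (d n)) - ln (real n) + 1)) \<le> c * norm (real n)"
    using eventually_ge_at_top[of 2]
  proof eventually_elim
    case (elim n)
    have "d n \<ge> 1"
      using dpos elim(3) by simp
    then have n: "real n \<ge> 2" and d: "real (d n) > 0"
      using elim(3) by auto
    have "4 / c * real n ^ 2 \<le> real (d n)"
      using elim(2) n by (simp add: field_simps)
    then have "real n ^ 3 / real (d n) \<le> real n ^ 3 / (4 / c * real n ^ 2)"
      using c n d by (intro divide_left_mono) auto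
    also have "\<dots> = c * real n / 4"
      using n c by (simp add: power2_eq_square power3_eq_cube field_simps)
    finally have "4 * (real n ^ 3 / real (d n)) \<le> c * real n"
      by linarith
    moreover have "2 * (1 + ln (real n)) \<le> c * real n"
      using elim(1) n by simp
    moreover have "\<bar>ln (real (p (d n) n)) - (real n - 1) * (ln (real (d n)) - ln (real n) + 1)\<bar>
        \<le> 2 * (real n ^ 3 / real (d n)) + 1 + ln (real n)"
      using ln_p_approx[of n "d n"] \<open>d n \<ge> 1\<close> elim(3) by simp
    ultimately show ?case
      unfolding real_norm_def by simp
  qed
qed

lemma ln_p_approx_quadratic_d:
  assumes "n \<ge> 2" "d \<ge> 1" "c > 0" "C > 0" "c * real n ^ 2 \<le> real d" "real d \<le> C * real n ^ 2"
  shows "\<bar>ln (real (p d n)) - real n * ln (real n)\<bar> \<le> (2 / c + \<bar>ln c\<bar> + \<bar>ln C\<bar> + 3) * real n"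
proof -
  have n: "real n \<ge> 2"
    using assms(1) by simp
  have "ln c + 2 * ln (real n) \<le> ln (real d)" and "ln (real d) \<le> ln C + 2 * ln (real n)"
    using assms n ln_mono[of "c * real n ^ 2" "real d"] ln_mono[of "real d" "C * real n ^ 2"]
    by (auto simp: ln_mult ln_realpow)
  then have "\<bar>ln (real d) - 2 * ln (real n)\<bar> \<le> \<bar>ln c\<bar> + \<bar>ln C\<bar>"
    by linarith
  then have "\<bar>(real n - 1) * (ln (real d) - 2 * ln (real n))\<bar> \<le> (real n - 1) * (\<bar>ln c\<bar> + \<bar>ln C\<bar>)"
    using n by (simp add: abs_mult mult_left_mono)
  also have "\<dots> \<le> real n * (\<bar>ln c\<bar> + \<bar>ln C\<bar>)"
    by (simp add: mult_right_mono)
  finally have main: "\<bar>(real n - 1) * (ln (real d) - 2 * ln (real n))\<bar> \<le> real n * (\<bar>ln c\<bar> + \<bar>ln C\<bar>)" .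
  have "real n ^ 3 / real d \<le> real n ^ 3 / (c * real n ^ 2)"
    using assms n by (intro divide_left_mono) auto
  also have "\<dots> = real n / c"
    using n by (simp add: power2_eq_square power3_eq_cube)
  finally have "2 * real n ^ 3 / real d \<le> 2 / c * real n"
    by simp
  moreover have "1 + 2 * ln (real n) \<le> 2 * real n"
    using ln_le_minus_one[of "real n"] n by simp
  moreover have "(real n - 1) * (ln (real d) - ln (real n) + 1) - real n * ln (real n)
      = (real n - 1) * (ln (real d) - 2 * ln (real n)) + real n - 1 - ln (real n)"
    by (simp add: algebra_simps)
  ultimately show ?thesis
    using ln_p_approx[OF assms(1,2)] main n ln_ge_zero[of "real n"]
    unfolding abs_le_iff by (simp add: algebra_simps)
qed

lemma ln_p_asymp_quadratic:
  assumes dpos: "\<forall>n\<ge>1. d n \<ge> 1"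
    and "\<exists>c C. c > 0 \<and> C > 0 \<and>
          (\<forall>\<^sub>F n in sequentially. c * real n ^ 2 \<le> real (d n) \<and> real (d n) \<le> C * real n ^ 2)"
  shows "(\<lambda>n. ln (real (p (d n) n)) - real n * ln (real n)) \<in> O(\<lambda>n. real n)"
proof -
  obtain c C where c: "c > 0" and C: "C > 0"
    and ev: "\<forall>\<^sub>F n in sequentially. c * real n ^ 2 \<le> real (d n) \<and> real (d n) \<le> C * real n ^ 2"
    using assms(2) by blast
  show ?thesis
  proof (rule landau_o.bigI)
    show "2 / c + \<bar>ln c\<bar> + \<bar>ln C\<bar> + 3 > 0"
      using c by (simp add: add_pos_nonneg)
    show "\<forall>\<^sub>F n in sequentially. norm (ln (real (p (d n) n)) - real n * ln (real n))
        \<le> (2 / c + \<bar>ln c\<bar> + \<bar>ln C\<bar> + 3) * norm (real n)"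
      using ev eventually_ge_at_top[of 2]
      by eventually_elim (use ln_p_approx_quadratic_d c C dpos in auto)
  qed
qed

lemma mult_ln_le_ln_binomial:
  assumes "1 \<le> x" "x * real m \<le> real N"
  shows "real m * ln x \<le> ln (real (N choose m))"
proof (cases "m = 0")
  case False
  have "m \<le> N"
    using assms mult_right_mono[OF assms(1), of "real m"] by simp
  have "x \<le> real N / real m"
    using assms False by (simp add: field_simps)
  then have "real m * ln x \<le> real m * ln (real N / real m)"
    using assms(1) by (intro mult_left_mono) auto
  also have "\<dots> = ln ((real N / real m) ^ m)"
    using False \<open>m \<le> N\<close> by (simp add: ln_realpow)
  also have "\<dots> \<le> ln (real (N choose m))"
    using binomial_ge_n_over_k_pow_k[OF \<open>m \<le> N\<close>, where 'a = real] False \<open>m \<le> N\<close>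
    by (intro ln_mono) auto
  finally show ?thesis .
qed simp

lemma square_div_8_le_binomial_floor:
  fixes y :: real
  assumes "8 \<le> y"
  shows "y\<^sup>2 / 8 \<le> real (nat \<lfloor>y\<rfloor> choose 2)"
proof -
  define K where "K = nat \<lfloor>y\<rfloor>"
  have K: "y - 1 < real K"
    using assms by (simp add: K_def)
  have "4 * y \<le> y * y"
    using assms by (intro mult_right_mono) auto
  then have "y\<^sup>2 \<le> 2 * (y - 1)\<^sup>2"
    by (simp add: power2_eq_square algebra_simps)
  also have "(y - 1)\<^sup>2 \<le> real K ^ 2"
    using K assms by (intro power_mono) auto
  also have "real K ^ 2 = 4 * (real K / 2) ^ 2"
    by (simp add: power_divide)
  also have "(real K / 2) ^ 2 \<le> real (K choose 2)"
  proof -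
    have "real 2 \<le> real K"
      using K assms by simp
    then have "2 \<le> K"
      by (simp only: of_nat_le_iff)
    from binomial_ge_n_over_k_pow_k[OF this] show ?thesis
      by simp
  qed
  finally show ?thesis
    by (simp add: K_def)
qed

lemma ln_p_ge_graph:
  fixes y :: real
  assumes y: "8 \<le> y" "y \<le> real d" "y \<le> real n - 1" "8 * real n \<le> y\<^sup>2"
  shows "(real n - 1 - y) * ln (y\<^sup>2 / (8 * real n)) \<le> ln (real (p d n))"
proof -
  \<comment> \<open>graphs with \<open>m\<close> edges on \<open>K\<close> vertices\<close>
  define K where "K = nat \<lfloor>y\<rfloor>"
  define m where "m = n - Suc K"
  define N where "N = K choose 2"
  define x where "x = y\<^sup>2 / (8 * real n)"
  have "real K \<le> y"
    using y(1) by (simp add: K_def)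
  then have "K \<le> d" "K < n"
    using y(2,3) by linarith+
  have n_pos: "real n > 0"
    using y by linarith
  have x: "1 \<le> x"
    using y(4) n_pos by (simp add: x_def)
  have "x * real m \<le> x * real n"
    using x by (intro mult_left_mono) (auto simp: m_def)
  also have "\<dots> \<le> real N"
    using square_div_8_le_binomial_floor[OF y(1)] n_pos by (simp add: x_def N_def K_def)
  finally have xmN: "x * real m \<le> real N" .
  then have "real m * ln x \<le> ln (real (N choose m))"
    using x by (intro mult_ln_le_ln_binomial)
  moreover have "(real n - 1 - y) * ln x \<le> real m * ln x"
    using \<open>real K \<le> y\<close> \<open>K < n\<close> x by (intro mult_right_mono) (auto simp: m_def of_nat_diff)
  moreover have "m \<le> N"
    using xmN mult_right_mono[OF x, of "real m"] by simp
  then have "ln (real (N choose m)) \<le> ln (real (p d n))"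
    using binomial_edges_le_p[OF \<open>K \<le> d\<close> \<open>K < n\<close>] by (intro ln_mono) (auto simp: N_def m_def)
  ultimately show ?thesis
    unfolding x_def[symmetric] by linarith
qed

lemma ln_p_le_square_bound:
  assumes "n \<ge> 2" "1 \<le> d" "d \<le> n ^ 2"
  shows "ln (real (p d n)) \<le> (real n - 1) * ln (real n ^ 2 + (real n - 1)) - (real n - 1) * ln (real n - 1)
           + (real n - 1) + real n ^ 3 / real n ^ 2"
proof -
  obtain k where n: "n = Suc k" and k: "k \<ge> 1"
    using assms(1) by (cases n) auto
  have "real k = real n - 1"
    using n by simp
  then show ?thesis
    using ln_p_Suc_le[OF k assms(2) assms(3)[unfolded n]] unfolding n[symmetric] of_nat_power
    by simp
qed

lemma eventually_ln_p_le_subquadratic: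
  assumes dpos: "\<forall>n\<ge>1. d n \<ge> 1"
    and lim: "(\<lambda>n. real (d n) / real n ^ 2) \<longlonglongrightarrow> 0" and c: "c > 0"
  shows "\<forall>\<^sub>F n in sequentially. ln (real (p (d n) n)) \<le> (1 + c) * (real n * ln (real n))"
proof -
  have "\<forall>\<^sub>F n in sequentially. real (d n) / real n ^ 2 < 1"
    using lim by (rule order_tendstoD) simp
  moreover have "\<forall>\<^sub>F n in sequentially.
      (real n - 1) * ln (real n ^ 2 + (real n - 1)) - (real n - 1) * ln (real n - 1) + (real n - 1)
        + real n ^ 3 / real n ^ 2 \<le> (1 + c) * (real n * ln (real n))"
    using c by real_asymp
  ultimately show ?thesis
    using eventually_ge_at_top[of 2]
  proof eventually_elim
    case (elim n)
    have "real (d n) < real (n ^ 2)"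
      using elim(1,3) by (simp add: field_simps)
    then have "d n \<le> n ^ 2"
      by simp
    moreover have "d n \<ge> 1"
      using dpos elim(3) by simp
    ultimately show ?case
      using ln_p_le_square_bound[OF elim(3)] elim(2) by (meson order_trans)
  qed
qed

lemma eventually_ln_p_ge_subquadratic:
  assumes dpos: "\<forall>n\<ge>1. d n \<ge> 1"
    and g: "g \<in> o(\<lambda>n. ln (real n))" "\<forall>\<^sub>F n in sequentially. ln (real (d n)) \<ge> ln (real n) + g n"
    and \<eta>: "0 < \<eta>" "\<eta> \<le> 1/4"
  shows "\<forall>\<^sub>F n in sequentially. (1 - 3 * \<eta>) * (real n * ln (real n)) \<le> ln (real (p (d n) n))"
proof -
  \<comment> \<open>graphs on about \<open>n powr (1 - \<eta>)\<close> coordinates; \<open>d n\<close> is at least that large by the hypothesis on \<open>g\<close>\<close>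
  define y where "y n = real n powr (1 - \<eta>)" for n :: nat
  have "\<forall>\<^sub>F n in sequentially. \<bar>g n\<bar> \<le> \<eta> * \<bar>ln (real n)\<bar>"
    using landau_o.smallD[OF g(1) \<eta>(1)] by simp
  moreover have "\<forall>\<^sub>F n in sequentially. 8 \<le> y n \<and> y n \<le> real n - 1 \<and> 8 * real n \<le> (y n)\<^sup>2 \<and>
      (1 - 3 * \<eta>) * (real n * ln (real n)) \<le> (real n - 1 - y n) * ln ((y n)\<^sup>2 / (8 * real n))"
    using \<eta> unfolding y_def by (intro eventually_conj) real_asymp+
  ultimately show ?thesis
    using g(2) eventually_ge_at_top[of 2]
  proof eventually_elim
    case (elim n)
    have d: "d n \<ge> 1"
      using dpos elim(4) by simp
    have "(1 - \<eta>) * ln (real n) \<le> ln (real (d n))"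
      using elim(1,3,4) by (simp add: algebra_simps)
    then have "y n \<le> real (d n)"
      using d elim(4) by (simp add: y_def powr_def ln_le_cancel_iff[symmetric] mult.commute)
    then show ?case
      using ln_p_ge_graph[of "y n" "d n" n] elim(2) by linarith
  qed
qed

lemma ln_p_asymp_subquadratic:
  assumes dpos: "\<forall>n\<ge>1. d n \<ge> 1"
    and lim: "(\<lambda>n. real (d n) / real n ^ 2) \<longlonglongrightarrow> 0"
    and "\<exists>g. g \<in> o(\<lambda>n. ln (real n)) \<and> (\<forall>\<^sub>F n in sequentially. ln (real (d n)) \<ge> ln (real n) + g n)"
  shows "(\<lambda>n. ln (real (p (d n) n)) - real n * ln (real n)) \<in> o(\<lambda>n. real n * ln (real n))"
proof (rule landau_o.smallI)
  fix c :: real assume c: "c > 0"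
  obtain g where g: "g \<in> o(\<lambda>n. ln (real n))" "\<forall>\<^sub>F n in sequentially. ln (real (d n)) \<ge> ln (real n) + g n"
    using assms(3) by blast
  define \<eta> where "\<eta> = min (1/4) (c/3)"
  have \<eta>: "0 < \<eta>" "\<eta> \<le> 1/4" "3 * \<eta> \<le> c"
    using c by (auto simp: \<eta>_def)
  show "\<forall>\<^sub>F n in sequentially.
      norm (ln (real (p (d n) n)) - real n * ln (real n)) \<le> c * norm (real n * ln (real n))"
    using eventually_ln_p_ge_subquadratic[OF dpos g \<eta>(1,2)] eventually_ln_p_le_subquadratic[OF dpos lim c]
      eventually_ge_at_top[of 1]
  proof eventually_elim
    case (elim n)
    have X: "0 \<le> real n * ln (real n)"
      using elim(3) by simp
    then have "real n * ln (real n) - c * (real n * ln (real n)) \<le> (1 - 3 * \<eta>) * (real n * ln (real n))"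
      using mult_right_mono[OF \<eta>(3) X] by (simp add: algebra_simps)
    moreover have "(1 + c) * (real n * ln (real n)) = real n * ln (real n) + c * (real n * ln (real n))"
      by (simp add: algebra_simps)
    ultimately show ?case
      using elim(1,2) X unfolding real_norm_def abs_le_iff by (simp add: abs_of_nonneg)
  qed
qed

theorem theorem2:
  fixes d :: "nat \<Rightarrow> nat"
  assumes dpos: "\<forall>n\<ge>1. d n \<ge> 1"
  shows
    "(\<forall>n\<ge>1. real (d n) > real n ^ 3 / 2 \<longrightarrow>
        1 \<le> real (p (d n) n) / real ((d n + n - 2) choose (d n - 1)) \<and>
        real (p (d n) n) / real ((d n + n - 2) choose (d n - 1))
          < 1 / (1 - real n ^ 3 / (2 * real (d n))))
   \<and> (filterlim (\<lambda>n. real (d n) / real n ^ 2) at_top sequentially \<longrightarrow>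
        (\<lambda>n. ln (real (p (d n) n))
              - (real n - 1) * (ln (real (d n)) - ln (real n) + 1)) \<in> o(\<lambda>n. real n))
   \<and> ((\<exists>c C. c > 0 \<and> C > 0 \<and>
          (\<forall>\<^sub>F n in sequentially. c * real n ^ 2 \<le> real (d n) \<and> real (d n) \<le> C * real n ^ 2)) \<longrightarrow>
        (\<lambda>n. ln (real (p (d n) n)) - real n * ln (real n)) \<in> O(\<lambda>n. real n))
   \<and> (((\<lambda>n. real (d n) / real n ^ 2) \<longlonglongrightarrow> 0) \<and>
       (\<exists>g. g \<in> o(\<lambda>n. ln (real n)) \<and>
          (\<forall>\<^sub>F n in sequentially. ln (real (d n)) \<ge> ln (real n) + g n)) \<longrightarrow>
        (\<lambda>n. ln (real (p (d n) n)) - real n * ln (real n)) \<in> o(\<lambda>n. real n * ln (real n)))"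
proof (intro conjI allI impI)
  fix n :: nat assume "n \<ge> 1" "real (d n) > real n ^ 3 / 2"
  with dpos p_div_binomial_bounds[of n "d n"] show
    "1 \<le> real (p (d n) n) / real ((d n + n - 2) choose (d n - 1))"
    "real (p (d n) n) / real ((d n + n - 2) choose (d n - 1)) < 1 / (1 - real n ^ 3 / (2 * real (d n)))"
    by auto
qed (use ln_p_asymp_superquadratic[OF dpos] ln_p_asymp_quadratic[OF dpos]
       ln_p_asymp_subquadratic[OF dpos] in blast)+

end
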